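(* Let $\Gamma^\infty$ be the infinite-horizon finite-action trading game described below, $m\ge1$, and $\epsilon\ge0$. If an assessment $(h^*,\mathscr B)\in\mathcal A(m)$ is an $\epsilon$-Perfect Bayesian equilibrium of the truncated game $\Gamma(m)$, then $(h^*,\mathscr B)$ is an $(\epsilon+w^m)$-Perfect Bayesian equilibrium of $\Gamma^\infty$.
   Context: $\Gamma^\infty$: finite state space $\Omega$, traders $I=\{1,\dots,n\}$ with partitions $\Pi_i$, security $X$, full-support common prior $\mu$, continuous strictly proper scoring rule $s$, $\beta\in(0,1)$, marginal cost $c>0$, cost function $K\ge0$; a finite set $\mathcal Y\subseteq[\min X,\max X]$ of announcements containing $y_0$ and a finite set $\mathcal E$ of signals with finitely many realizations. At $t_0$ nature draws $\omega^*\sim\mu$, the market maker announces $y_0$; at $t_k$ ($k\ge1$) trader $((k-1)\bmod n)+1$ privately picks a signal and, for each realization, an announcement in $\mathcal Y$; the realized announcement $y_k$ is public. The null action repeats the previous announcement and buys no signal. Payoff at $t_k$: $\beta^k(s(y_k,X(\omega^* ))-s(y_{k-1},X(\omega^* ))-cK(\mathcal R))$; payoffs summed over one's moves. An assessment $(\sigma,\mathscr B)$ consists of a behavior strategy profile and beliefs (over the full uncertainty) at every information set; it is consistent if beliefs follow from $\mu,\sigma$ by Bayes' rule whenever possible. $V_i(\mathcal I,\sigma,\mathscr B)$ denotes trader $i$'s continuation payoff at information set $\mathcal I$ under $\sigma$ with beliefs from $\mathscr B$. A consistent assessment $(\sigma^*,\mathscr B)$ is an $\epsilon$-Perfect Bayesian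 equilibrium if there is no information set $\mathcal I$ with mover $i$ and strategy $\sigma_i$ with $V_i(\mathcal I,(\sigma_i,\sigma^*_{-i}),\mathscr B)>V_i(\mathcal I,\sigma^*,\mathscr B)+\epsilon$ (deviations ranging over the strategies of the game in question). Truncated game $\Gamma(m)$: same as $\Gamma^\infty$ except that at all times $t_k$ with $k>m$ the only available action is the null action. $\Sigma(m)$ denotes its strategy profiles. $\mathcal A(m)$ is the set of assessments $(h,\mathscr B)$ with $h\in\Sigma(m)$ whose beliefs do not update after $t_m$ (if $k>m$ and $\mathcal I_{k-1}$ immediately precedes $\mathcal I_k$ then $\mathscr B(\mathcal I_k)=\mathscr B(\mathcal I_{k-1})$). Let $w^m=\sup_{\mathcal I,\mathscr B}\sup_{i,\ \sigma=_{m-1}\tau}|V_i(\mathcal I,\sigma,\mathscr B)-V_i(\mathcal I,\tau,\mathscr B)|$, where $\sigma=_{m-1}\tau$ means the profiles coincide at all information sets up to time $t_{m-1}$ and the supremum ranges over all information sets and all belief systems of $\Gamma^\infty$. *)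

theory Defs
  imports "HOL-Probability.Probability"
begin

text \<open>Traders are 1..ntr.  A signal is a function from states to realizations
  (type 'r); the set of available signals is sigs.\<close>

record ('w, 'r) mkt =
  ntr   :: nat
  part  :: "nat \<Rightarrow> 'w \<Rightarrow> 'w set"   \<comment> \<open>cell of trader i's partition containing the state\<close>
  sec   :: "'w \<Rightarrow> real"
  prior :: "'w pmf"
  score :: "real \<Rightarrow> real \<Rightarrow> real"
  disc  :: real
  mc    :: real
  kost  :: "('w \<Rightarrow> 'r) \<Rightarrow> real"
  anns  :: "real set"
  y0    :: real
  sigs  :: "('w \<Rightarrow> 'r) set"

definition xmin :: "('w::finite, 'r) mkt \<Rightarrow> real" where
  "xmin M = Min (range (sec M))"
definition xmax :: "('w::finite, 'r) mkt \<Rightarrow> real" where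
  "xmax M = Max (range (sec M))"

definition strictly_proper :: "(real \<Rightarrow> real \<Rightarrow> real) \<Rightarrow> real \<Rightarrow> real \<Rightarrow> bool" where
  "strictly_proper s a b \<longleftrightarrow>
     (\<forall>p :: real pmf. finite (set_pmf p) \<and> set_pmf p \<subseteq> {a..b} \<longrightarrow>
        (\<forall>y\<in>{a..b}. y \<noteq> measure_pmf.expectation p (\<lambda>x. x) \<longrightarrow>
           measure_pmf.expectation p (\<lambda>x. s y x)
             < measure_pmf.expectation p (\<lambda>x. s (measure_pmf.expectation p (\<lambda>x. x)) x)))"

definition continuous_score :: "(real \<Rightarrow> real \<Rightarrow> real) \<Rightarrow> real \<Rightarrow> real \<Rightarrow> bool" where
  "continuous_score s a b \<longleftrightarrow> (\<forall>x\<in>{a..b}. continuous_on {a..b} (\<lambda>y. s y x))"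

definition is_partition_fun :: "('w \<Rightarrow> 'w set) \<Rightarrow> bool" where
  "is_partition_fun P \<longleftrightarrow> (\<forall>w. w \<in> P w) \<and> (\<forall>w w'. w' \<in> P w \<longrightarrow> P w' = P w)"

definition market_ok :: "('w::finite, 'r) mkt \<Rightarrow> bool" where
  "market_ok M \<longleftrightarrow>
     ntr M \<ge> 1 \<and>
     (\<forall>i\<in>{1..ntr M}. is_partition_fun (part M i)) \<and>
     set_pmf (prior M) = UNIV \<and>
     strictly_proper (score M) (xmin M) (xmax M) \<and>
     continuous_score (score M) (xmin M) (xmax M) \<and>
     0 < disc M \<and> disc M < 1 \<and>
     0 < mc M \<and>
     (\<forall>e\<in>sigs M. 0 \<le> kost M e) \<and>
     finite (anns M) \<and> anns M \<subseteq> {xmin M..xmax M} \<and> y0 M \<in> anns M \<and>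
     finite (sigs M)"

text \<open>Actions: the null action, or a signal together with an announcement
  for each realization.\<close>
datatype ('w, 'r) act = Null | Act "'w \<Rightarrow> 'r" "'r \<Rightarrow> real"

type_synonym ('w, 'r) hist = "'w \<times> ('w, 'r) act list"
  \<comment> \<open>true state and the actions taken at t_1, ..., t_k\<close>

type_synonym ('w, 'r) view = "'w set \<times> real list \<times> (('w, 'r) act \<times> 'r option) list"
  \<comment> \<open>own partition cell, public announcements y_0..y_k, own moves with realizations\<close>

definition mover :: "nat \<Rightarrow> nat \<Rightarrow> nat" where
  "mover n k = ((k - 1) mod n) + 1"

text \<open>Announcement y_j after the actions as (j \<le> length as).\<close>
fun ann :: "real \<Rightarrow> 'w \<Rightarrow> ('w, 'r) act list \<Rightarrow> nat \<Rightarrow> real" where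
  "ann y w as 0 = y"
| "ann y w as (Suc j) =
     (case as ! j of Null \<Rightarrow> ann y w as j | Act e f \<Rightarrow> f (e w))"

definition realization :: "'w \<Rightarrow> ('w, 'r) act \<Rightarrow> 'r option" where
  "realization w a = (case a of Null \<Rightarrow> None | Act e f \<Rightarrow> Some (e w))"

definition act_cost :: "('w, 'r) mkt \<Rightarrow> ('w, 'r) act \<Rightarrow> real" where
  "act_cost M a = (case a of Null \<Rightarrow> 0 | Act e f \<Rightarrow> kost M e)"

text \<open>Payoff earned by the mover at t_j (j \<ge> 1) along history h.\<close>
definition payoff :: "('w, 'r) mkt \<Rightarrow> ('w, 'r) hist \<Rightarrow> nat \<Rightarrow> real" where
  "payoff M h j =
     disc M ^ j * (score M (ann (y0 M) (fst h) (snd h) j) (sec M (fst h))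
                   - score M (ann (y0 M) (fst h) (snd h) (j - 1)) (sec M (fst h))
                   - mc M * act_cost M (snd h ! (j - 1)))"

definition view :: "('w, 'r) mkt \<Rightarrow> nat \<Rightarrow> ('w, 'r) hist \<Rightarrow> ('w, 'r) view" where
  "view M i h =
     (part M i (fst h),
      map (ann (y0 M) (fst h) (snd h)) [0..<Suc (length (snd h))],
      map (\<lambda>j. (snd h ! (j - 1), realization (fst h) (snd h ! (j - 1))))
          (filter (\<lambda>j. mover (ntr M) j = i) [1..<Suc (length (snd h))]))"

text \<open>Number of the move decided at an information set with view v
  (the view records y_0..y_{k-1}, so the next move is t_k).\<close>
definition movetime :: "('w, 'r) view \<Rightarrow> nat" where
  "movetime v = length (fst (snd v))"

definition vtime :: "('w, 'r) view \<Rightarrow> nat" where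
  "vtime v = movetime v - 1"

text \<open>Horizon T: T = \<infinity> is the game Gamma-infinity, T = m the truncated game
  Gamma(m).  Legal actions at t_k.\<close>
definition legal :: "('w, 'r) mkt \<Rightarrow> enat \<Rightarrow> nat \<Rightarrow> ('w, 'r) act \<Rightarrow> bool" where
  "legal M T k a \<longleftrightarrow> a = Null \<or>
     (enat k \<le> T \<and> (\<exists>e f. a = Act e f \<and> e \<in> sigs M \<and> (\<forall>w. f (e w) \<in> anns M)))"

definition nodes :: "('w, 'r) mkt \<Rightarrow> enat \<Rightarrow> ('w, 'r) hist set" where
  "nodes M T = {h. \<forall>j < length (snd h). legal M T (Suc j) (snd h ! j)}"

definition infoset :: "('w, 'r) mkt \<Rightarrow> enat \<Rightarrow> nat \<Rightarrow> ('w, 'r) view \<Rightarrow> ('w, 'r) hist set" where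
  "infoset M T i v = {h \<in> nodes M T. view M i h = v}"

definition is_infoset :: "('w, 'r) mkt \<Rightarrow> enat \<Rightarrow> nat \<Rightarrow> ('w, 'r) view \<Rightarrow> bool" where
  "is_infoset M T i v \<longleftrightarrow> infoset M T i v \<noteq> {}"

definition move_infoset :: "('w, 'r) mkt \<Rightarrow> enat \<Rightarrow> nat \<Rightarrow> ('w, 'r) view \<Rightarrow> bool" where
  "move_infoset M T i v \<longleftrightarrow> is_infoset M T i v \<and> mover (ntr M) (movetime v) = i"

type_synonym ('w, 'r) bstrat = "('w, 'r) view \<Rightarrow> ('w, 'r) act pmf"
type_synonym ('w, 'r) profile = "nat \<Rightarrow> ('w, 'r) bstrat"
type_synonym ('w, 'r) beliefs = "nat \<Rightarrow> ('w, 'r) view \<Rightarrow> ('w, 'r) hist pmf"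

definition strat_ok :: "('w, 'r) mkt \<Rightarrow> enat \<Rightarrow> ('w, 'r) bstrat \<Rightarrow> bool" where
  "strat_ok M T si \<longleftrightarrow> (\<forall>v. \<forall>a\<in>set_pmf (si v). legal M T (movetime v) a)"

definition profile_ok :: "('w, 'r) mkt \<Rightarrow> enat \<Rightarrow> ('w, 'r) profile \<Rightarrow> bool" where
  "profile_ok M T \<sigma> \<longleftrightarrow> (\<forall>i\<in>{1..ntr M}. strat_ok M T (\<sigma> i))"

definition belief_system :: "('w, 'r) mkt \<Rightarrow> enat \<Rightarrow> ('w, 'r) beliefs \<Rightarrow> bool" where
  "belief_system M T B \<longleftrightarrow>
     (\<forall>i\<in>{1..ntr M}. \<forall>v. is_infoset M T i v \<longrightarrow> set_pmf (B i v) \<subseteq> infoset M T i v)"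

definition step :: "('w, 'r) mkt \<Rightarrow> ('w, 'r) profile \<Rightarrow> ('w, 'r) hist \<Rightarrow> ('w, 'r) hist pmf" where
  "step M \<sigma> h =
     (let i = mover (ntr M) (Suc (length (snd h)))
      in map_pmf (\<lambda>a. (fst h, snd h @ [a])) (\<sigma> i (view M i h)))"

fun dist :: "('w, 'r) mkt \<Rightarrow> ('w, 'r) profile \<Rightarrow> ('w, 'r) hist pmf \<Rightarrow> nat \<Rightarrow> ('w, 'r) hist pmf" where
  "dist M \<sigma> D 0 = D"
| "dist M \<sigma> D (Suc t) = bind_pmf (dist M \<sigma> D t) (step M \<sigma>)"

definition root :: "('w, 'r) mkt \<Rightarrow> ('w, 'r) hist pmf" where
  "root M = map_pmf (\<lambda>w. (w, [])) (prior M)"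

text \<open>Expected discounted payoff of trader i from the moves after time k,
  when the history after k moves is distributed as D and play follows sigma.\<close>
definition cont_value :: "('w, 'r) mkt \<Rightarrow> nat \<Rightarrow> ('w, 'r) profile \<Rightarrow> ('w, 'r) hist pmf \<Rightarrow> nat \<Rightarrow> real" where
  "cont_value M i \<sigma> D k =
     (\<Sum>j. if k < j \<and> mover (ntr M) j = i
          then measure_pmf.expectation (dist M \<sigma> D (j - k)) (\<lambda>h. payoff M h j) else 0)"

text \<open>V_i(I, sigma, B), where the information set I is given by its owner j
  and view v.\<close>
definition V :: "('w, 'r) mkt \<Rightarrow> nat \<Rightarrow> nat \<Rightarrow> ('w, 'r) view \<Rightarrow> ('w, 'r) profile \<Rightarrow> ('w, 'r) beliefs \<Rightarrow> real" where
  "V M i j v \<sigma> B = cont_value M i \<sigma> (B j v) (vtime v)"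

definition consistent :: "('w, 'r) mkt \<Rightarrow> enat \<Rightarrow> ('w, 'r) profile \<Rightarrow> ('w, 'r) beliefs \<Rightarrow> bool" where
  "consistent M T \<sigma> B \<longleftrightarrow>
     profile_ok M T \<sigma> \<and> belief_system M T B \<and>
     (\<forall>i\<in>{1..ntr M}. \<forall>v. is_infoset M T i v \<longrightarrow>
        measure_pmf.prob (dist M \<sigma> (root M) (vtime v)) {h. view M i h = v} > 0 \<longrightarrow>
        B i v = cond_pmf (dist M \<sigma> (root M) (vtime v)) {h. view M i h = v})"

definition eps_PBE :: "('w, 'r) mkt \<Rightarrow> enat \<Rightarrow> real \<Rightarrow> ('w, 'r) profile \<Rightarrow> ('w, 'r) beliefs \<Rightarrow> bool" where
  "eps_PBE M T \<epsilon> \<sigma> B \<longleftrightarrow>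
     consistent M T \<sigma> B \<and>
     (\<forall>i\<in>{1..ntr M}. \<forall>v. move_infoset M T i v \<longrightarrow>
        (\<forall>si. strat_ok M T si \<longrightarrow> V M i i v (\<sigma>(i := si)) B \<le> V M i i v \<sigma> B + \<epsilon>))"

text \<open>Beliefs do not update after t_m (in the truncated game Gamma(m)): a
  trader's belief after k > m moves equals his belief after k - 1 moves
  (the only possible move at t_k being the null action).\<close>
definition no_update :: "('w, 'r) mkt \<Rightarrow> nat \<Rightarrow> ('w, 'r) beliefs \<Rightarrow> bool" where
  "no_update M m B \<longleftrightarrow>
     (\<forall>i\<in>{1..ntr M}. \<forall>h\<in>nodes M (enat m). m \<le> length (snd h) \<longrightarrow>
        B i (view M i (fst h, snd h @ [Null]))
          = map_pmf (\<lambda>g. (fst g, snd g @ [Null])) (B i (view M i h)))"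

definition A_set :: "('w, 'r) mkt \<Rightarrow> nat \<Rightarrow> (('w, 'r) profile \<times> ('w, 'r) beliefs) set" where
  "A_set M m = {(h, B). profile_ok M (enat m) h \<and> belief_system M \<infinity> B \<and> no_update M m B}"

definition agree_upto :: "('w, 'r) mkt \<Rightarrow> nat \<Rightarrow> ('w, 'r) profile \<Rightarrow> ('w, 'r) profile \<Rightarrow> bool" where
  "agree_upto M m' \<sigma> \<tau> \<longleftrightarrow>
     (\<forall>j\<in>{1..ntr M}. \<forall>v. move_infoset M \<infinity> j v \<and> movetime v \<le> m' \<longrightarrow> \<sigma> j v = \<tau> j v)"

definition w_bound :: "('w, 'r) mkt \<Rightarrow> nat \<Rightarrow> real" where
  "w_bound M m = Sup {\<bar>V M i j v \<sigma> B - V M i j v \<tau> B\<bar> | i j v \<sigma> \<tau> B.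
      i \<in> {1..ntr M} \<and> j \<in> {1..ntr M} \<and> move_infoset M \<infinity> j v \<and>
      belief_system M \<infinity> B \<and> profile_ok M \<infinity> \<sigma> \<and> profile_ok M \<infinity> \<tau> \<and>
      agree_upto M (m - 1) \<sigma> \<tau>}"

end

theory Submission
  imports Defs
begin

text \<open>Replace a deviation by its truncation, which plays the null action after t_m.
  The truncation agrees with the deviation up to t_m, so it changes the deviator's
  payoff by at most w^m. It is a strategy of the truncated game Gamma(m): at
  information sets up to t_m the equilibrium condition of Gamma(m) bounds its gain
  by epsilon, and at later information sets it coincides with the equilibrium
  strategy, which can only play the null action there. Consistency carries over
  because every history reached under a profile of Gamma(m) is a history of Gamma(m).\<close>

lemma mover_in_traders: "1 \<le> n \<Longrightarrow> mover n k \<in> {1..n}"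
  unfolding mover_def by (auto intro: Suc_leI)

lemma movetime_view: "movetime (view M i h) = Suc (length (snd h))"
  by (simp add: movetime_def view_def)

lemma movetime_infoset: "h \<in> infoset M T i v \<Longrightarrow> movetime v = Suc (length (snd h))"
  by (auto simp: infoset_def movetime_view)

lemma length_dist:
  assumes "set_pmf D \<subseteq> {h. length (snd h) = t}"
  shows "set_pmf (dist M \<sigma> D n) \<subseteq> {h. length (snd h) = t + n}"
  using assms by (induction n) (auto simp: step_def Let_def)

lemma step_in_nodes:
  assumes "1 \<le> ntr M" and "profile_ok M T \<sigma>" and "h \<in> nodes M T"
    and "g \<in> set_pmf (step M \<sigma> h)"
  shows "g \<in> nodes M T"
proof -
  let ?i = "mover (ntr M) (Suc (length (snd h)))"
  obtain a where a: "a \<in> set_pmf (\<sigma> ?i (view M ?i h))" and g: "g = (fst h, snd h @ [a])"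
    using assms(4) by (auto simp: step_def Let_def)
  have "strat_ok M T (\<sigma> ?i)"
    using assms(1,2) mover_in_traders by (auto simp: profile_ok_def)
  then have "legal M T (movetime (view M ?i h)) a"
    using a unfolding strat_ok_def by blast
  then have "legal M T (Suc (length (snd h))) a"
    by (simp add: movetime_view)
  then show ?thesis
    using assms(3) by (auto simp: g nodes_def nth_append less_Suc_eq)
qed

lemma dist_in_nodes:
  assumes "1 \<le> ntr M" and "profile_ok M T \<sigma>" and "set_pmf D \<subseteq> nodes M T"
  shows "set_pmf (dist M \<sigma> D n) \<subseteq> nodes M T"
proof (induction n)
  case (Suc n)
  then show ?case
    using step_in_nodes[OF assms(1,2)] by auto
qed (use assms(3) in simp)

lemma dist_cong:
  assumes "set_pmf D \<subseteq> {h. length (snd h) = t}"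
    and "\<And>j v. t < movetime v \<Longrightarrow> \<sigma> j v = \<tau> j v"
  shows "dist M \<sigma> D n = dist M \<tau> D n"
proof (induction n)
  case (Suc n)
  have "step M \<sigma> h = step M \<tau> h" if "h \<in> set_pmf (dist M \<tau> D n)" for h
  proof -
    have "length (snd h) = t + n"
      using that length_dist[OF assms(1), of M \<tau> n] by auto
    then show ?thesis
      using assms(2) by (simp add: step_def Let_def movetime_view)
  qed
  then show ?case
    using Suc by (auto intro: bind_pmf_cong)
qed simp

lemma cont_value_cong:
  assumes "set_pmf D \<subseteq> {h. length (snd h) = t}"
    and "\<And>j v. t < movetime v \<Longrightarrow> \<sigma> j v = \<tau> j v"
  shows "cont_value M i \<sigma> D k = cont_value M i \<tau> D k"
proof -
  have dist_eq: "\<And>n. dist M \<sigma> D n = dist M \<tau> D n"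
    using assms by (rule dist_cong)
  show ?thesis
    unfolding cont_value_def dist_eq ..
qed

lemma set_pmf_beliefs:
  assumes "belief_system M T B" and "j \<in> {1..ntr M}" and "is_infoset M T j v"
  shows "set_pmf (B j v) \<subseteq> nodes M T \<inter> {h. length (snd h) = vtime v}"
proof -
  have "set_pmf (B j v) \<subseteq> infoset M T j v"
    using assms unfolding belief_system_def by blast
  then show ?thesis
    by (auto simp: vtime_def movetime_infoset) (auto simp: infoset_def)
qed

lemma V_cong:
  assumes "belief_system M T B" and "j \<in> {1..ntr M}" and "is_infoset M T j v"
    and "\<And>l u. movetime v \<le> movetime u \<Longrightarrow> \<sigma> l u = \<tau> l u"
  shows "V M i j v \<sigma> B = V M i j v \<tau> B"
proof -
  obtain h where "h \<in> infoset M T j v"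
    using assms(3) by (auto simp: is_infoset_def)
  then have "movetime v = Suc (vtime v)"
    by (simp add: vtime_def movetime_infoset)
  then show ?thesis
    unfolding V_def using set_pmf_beliefs[OF assms(1-3)] assms(4)
    by (intro cont_value_cong[where t = "vtime v"]) auto
qed

lemma abs_expectation_le:
  fixes f :: "'a \<Rightarrow> real"
  assumes "\<And>x. x \<in> set_pmf p \<Longrightarrow> \<bar>f x\<bar> \<le> c"
  shows "\<bar>measure_pmf.expectation p f\<bar> \<le> c"
proof -
  have bound: "AE x in measure_pmf p. \<bar>f x\<bar> \<le> c"
    using assms by (simp add: AE_measure_pmf_iff)
  then have "integrable (measure_pmf p) (\<lambda>x. \<bar>f x\<bar>)"
    by (intro measure_pmf.integrable_const_bound[where B = c]) auto
  then have "measure_pmf.expectation p (\<lambda>x. \<bar>f x\<bar>) \<le> c"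
    using bound by (rule measure_pmf.integral_le_const)
  then show ?thesis
    using integral_abs_bound[of p f] by linarith
qed

lemma abs_suminf_le_geometric:
  fixes g :: "nat \<Rightarrow> real"
  assumes "\<And>n. \<bar>g n\<bar> \<le> C * b ^ n" and "0 \<le> b" and "b < 1"
  shows "\<bar>suminf g\<bar> \<le> C / (1 - b)"
proof -
  have "(\<lambda>n. C * b ^ n) sums (C / (1 - b))"
    using assms(2,3) sums_mult[OF geometric_sums, of b C] by (simp add: divide_inverse)
  then show ?thesis
    using norm_suminf_le[of g "\<lambda>n. C * b ^ n"] assms(1) by (simp add: sums_iff)
qed

lemma ann_in_anns:
  assumes "h \<in> nodes M \<infinity>" and "y0 M \<in> anns M" and "j \<le> length (snd h)"
  shows "ann (y0 M) (fst h) (snd h) j \<in> anns M"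
  using assms(3)
proof (induction j)
  case (Suc j)
  then have "legal M \<infinity> (Suc j) (snd h ! j)"
    using assms(1) by (auto simp: nodes_def)
  then show ?case
    using Suc by (auto simp: legal_def split: act.splits)
qed (use assms(2) in simp)

lemma payoff_bounded:
  assumes "market_ok M"
  obtains C where "0 \<le> C"
    and "\<And>h j. h \<in> nodes M \<infinity> \<Longrightarrow> 1 \<le> j \<Longrightarrow> j \<le> length (snd h) \<Longrightarrow>
           \<bar>payoff M h j\<bar> \<le> C * disc M ^ j"
proof
  define S where "S = Max ((\<lambda>(y, x). \<bar>score M y x\<bar>) ` (anns M \<times> range (sec M)))"
  define K where "K = Max (insert 0 (kost M ` sigs M))"
  have M: "finite (anns M)" "y0 M \<in> anns M" "finite (sigs M)" "0 < mc M" "0 < disc M"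
    "\<forall>e\<in>sigs M. 0 \<le> kost M e"
    using assms by (auto simp: market_ok_def)
  have S: "\<bar>score M y (sec M w)\<bar> \<le> S" if "y \<in> anns M" for y w
    unfolding S_def using M(1) that by (intro Max_ge) auto
  have K: "0 \<le> K" "\<And>e. e \<in> sigs M \<Longrightarrow> kost M e \<le> K"
    unfolding K_def using M(3) by (auto intro: Max_ge)
  have "0 \<le> S"
    using S[OF M(2)] abs_ge_zero order_trans by blast
  then show "0 \<le> 2 * S + mc M * K"
    using K(1) M(4) by simp
  fix h j assume h: "h \<in> nodes M \<infinity>" and j: "1 \<le> j" "j \<le> length (snd h)"
  let ?cost = "act_cost M (snd h ! (j - 1))"
  let ?score = "\<lambda>k. score M (ann (y0 M) (fst h) (snd h) k) (sec M (fst h))"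
  have "j - 1 < length (snd h)"
    using j by simp
  then have "legal M \<infinity> (Suc (j - 1)) (snd h ! (j - 1))"
    using h unfolding nodes_def by blast
  then have "\<bar>?cost\<bar> \<le> K"
    using K M(6) by (auto simp: legal_def act_cost_def)
  then have "\<bar>mc M * ?cost\<bar> \<le> mc M * K"
    using M(4) by (simp add: abs_mult mult_left_mono)
  moreover have "\<bar>?score k\<bar> \<le> S" if "k \<le> j" for k
    using S ann_in_anns[OF h M(2)] that j(2) by simp
  then have "\<bar>?score j\<bar> \<le> S" "\<bar>?score (j - 1)\<bar> \<le> S"
    by simp_all
  ultimately have "\<bar>?score j - ?score (j - 1) - mc M * ?cost\<bar> \<le> 2 * S + mc M * K"
    by linarith
  then show "\<bar>payoff M h j\<bar> \<le> (2 * S + mc M * K) * disc M ^ j"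
    using M(5) unfolding payoff_def by (simp add: abs_mult mult.commute mult_left_mono)
qed

lemma V_bounded:
  assumes "market_ok M"
  obtains C where "\<And>i j v \<sigma> B. profile_ok M \<infinity> \<sigma> \<Longrightarrow> belief_system M \<infinity> B \<Longrightarrow>
    j \<in> {1..ntr M} \<Longrightarrow> is_infoset M \<infinity> j v \<Longrightarrow> \<bar>V M i j v \<sigma> B\<bar> \<le> C"
proof -
  obtain C where C: "0 \<le> C"
    and payoff: "\<And>h j. h \<in> nodes M \<infinity> \<Longrightarrow> 1 \<le> j \<Longrightarrow> j \<le> length (snd h) \<Longrightarrow>
                   \<bar>payoff M h j\<bar> \<le> C * disc M ^ j"
    using payoff_bounded[OF assms] by blast
  have M: "1 \<le> ntr M" "0 < disc M" "disc M < 1"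
    using assms by (auto simp: market_ok_def)
  have "\<bar>V M i j v \<sigma> B\<bar> \<le> C / (1 - disc M)"
    if \<sigma>: "profile_ok M \<infinity> \<sigma>" and B: "belief_system M \<infinity> B"
      and j: "j \<in> {1..ntr M}" and v: "is_infoset M \<infinity> j v" for i j v \<sigma> B
  proof -
    define t where "t = vtime v"
    have D: "set_pmf (B j v) \<subseteq> nodes M \<infinity>" "set_pmf (B j v) \<subseteq> {h. length (snd h) = t}"
      using set_pmf_beliefs[OF B j v] by (auto simp: t_def)
    define g where "g n = (if t < n \<and> mover (ntr M) n = i
      then measure_pmf.expectation (dist M \<sigma> (B j v) (n - t)) (\<lambda>h. payoff M h n) else 0)" for n
    have "\<bar>g n\<bar> \<le> C * disc M ^ n" for n
    proof (cases "t < n")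
      case True
      have "\<bar>payoff M h n\<bar> \<le> C * disc M ^ n" if "h \<in> set_pmf (dist M \<sigma> (B j v) (n - t))" for h
      proof (rule payoff)
        show "h \<in> nodes M \<infinity>"
          using that dist_in_nodes[OF M(1) \<sigma> D(1)] by blast
        show "n \<le> length (snd h)"
          using that length_dist[OF D(2)] True by fastforce
      qed (use True in simp)
      then show ?thesis
        unfolding g_def using C M(2) by (simp add: abs_expectation_le)
    qed (use C M in \<open>simp add: g_def\<close>)
    then have "\<bar>suminf g\<bar> \<le> C / (1 - disc M)"
      using M by (intro abs_suminf_le_geometric) auto
    then show ?thesis
      unfolding V_def cont_value_def g_def t_def .
  qed
  then show thesis
    using that by blast
qed

lemma abs_V_diff_le_w_bound:
  assumes "market_ok M" and "i \<in> {1..ntr M}" and "j \<in> {1..ntr M}"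
    and "move_infoset M \<infinity> j v" and "belief_system M \<infinity> B"
    and "profile_ok M \<infinity> \<sigma>" and "profile_ok M \<infinity> \<tau>"
    and "agree_upto M (m - 1) \<sigma> \<tau>"
  shows "\<bar>V M i j v \<sigma> B - V M i j v \<tau> B\<bar> \<le> w_bound M m"
proof -
  define W where "W = {\<bar>V M i j v \<sigma> B - V M i j v \<tau> B\<bar> | i j v \<sigma> \<tau> B.
      i \<in> {1..ntr M} \<and> j \<in> {1..ntr M} \<and> move_infoset M \<infinity> j v \<and>
      belief_system M \<infinity> B \<and> profile_ok M \<infinity> \<sigma> \<and> profile_ok M \<infinity> \<tau> \<and>
      agree_upto M (m - 1) \<sigma> \<tau>}"
  obtain C where C: "\<And>i j v \<sigma> B. profile_ok M \<infinity> \<sigma> \<Longrightarrow> belief_system M \<infinity> B \<Longrightarrow>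
    j \<in> {1..ntr M} \<Longrightarrow> is_infoset M \<infinity> j v \<Longrightarrow> \<bar>V M i j v \<sigma> B\<bar> \<le> C"
    using V_bounded[OF assms(1)] by blast
  have "bdd_above W"
  proof (rule bdd_aboveI)
    fix x assume "x \<in> W"
    then obtain i j v \<sigma> \<tau> B where x: "x = \<bar>V M i j v \<sigma> B - V M i j v \<tau> B\<bar>"
      and "j \<in> {1..ntr M}" "is_infoset M \<infinity> j v" "belief_system M \<infinity> B"
        "profile_ok M \<infinity> \<sigma>" "profile_ok M \<infinity> \<tau>"
      unfolding W_def move_infoset_def by blast
    then have "\<bar>V M i j v \<sigma> B\<bar> \<le> C" "\<bar>V M i j v \<tau> B\<bar> \<le> C"
      using C by blast+
    then show "x \<le> 2 * C"
      unfolding x by linarith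
  qed
  moreover have "\<bar>V M i j v \<sigma> B - V M i j v \<tau> B\<bar> \<in> W"
    unfolding W_def using assms(2-) by blast
  ultimately show ?thesis
    unfolding w_bound_def W_def[symmetric] by (simp add: cSup_upper)
qed

lemma legal_enat_imp_legal_infinity: "legal M (enat m) k a \<Longrightarrow> legal M \<infinity> k a"
  by (auto simp: legal_def)

lemma legal_infinity_imp_legal_enat: "k \<le> m \<Longrightarrow> legal M \<infinity> k a \<Longrightarrow> legal M (enat m) k a"
  by (auto simp: legal_def)

lemma strat_ok_enat_imp_strat_ok_infinity: "strat_ok M (enat m) s \<Longrightarrow> strat_ok M \<infinity> s"
  unfolding strat_ok_def by (blast intro: legal_enat_imp_legal_infinity)

lemma profile_ok_enat_imp_profile_ok_infinity:
  "profile_ok M (enat m) \<sigma> \<Longrightarrow> profile_ok M \<infinity> \<sigma>"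
  unfolding profile_ok_def by (blast intro: strat_ok_enat_imp_strat_ok_infinity)

lemma strat_ok_enat_after_horizon:
  assumes "strat_ok M (enat m) s" and "m < movetime u"
  shows "s u = return_pmf Null"
proof -
  have "legal M (enat m) (movetime u) a" if "a \<in> set_pmf (s u)" for a
    using assms(1) that unfolding strat_ok_def by blast
  then have "set_pmf (s u) \<subseteq> {Null}"
    using assms(2) by (auto simp: legal_def)
  then show ?thesis
    by (simp add: set_pmf_subset_singleton)
qed

lemma move_infoset_infinity_imp_move_infoset_enat:
  assumes "move_infoset M \<infinity> i v" and "movetime v \<le> m"
  shows "move_infoset M (enat m) i v"
proof -
  obtain h where h: "h \<in> infoset M \<infinity> i v"
    using assms(1) by (auto simp: move_infoset_def is_infoset_def)
  then have "length (snd h) < m"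
    using assms(2) movetime_infoset by fastforce
  then have "h \<in> infoset M (enat m) i v"
    using h by (auto simp: infoset_def nodes_def intro: legal_infinity_imp_legal_enat)
  then show ?thesis
    using assms(1) by (auto simp: move_infoset_def is_infoset_def)
qed

lemma consistent_enat_imp_consistent_infinity:
  assumes "1 \<le> ntr M" and "consistent M (enat m) \<sigma> B" and "belief_system M \<infinity> B"
  shows "consistent M \<infinity> \<sigma> B"
  unfolding consistent_def
proof (intro conjI ballI allI impI)
  have \<sigma>: "profile_ok M (enat m) \<sigma>"
    using assms(2) by (simp add: consistent_def)
  then show "profile_ok M \<infinity> \<sigma>"
    by (rule profile_ok_enat_imp_profile_ok_infinity)
  fix i v
  assume i: "i \<in> {1..ntr M}"
    and pos: "measure_pmf.prob (dist M \<sigma> (root M) (vtime v)) {h. view M i h = v} > 0"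
  then obtain h where h: "h \<in> set_pmf (dist M \<sigma> (root M) (vtime v))" "view M i h = v"
    using measure_pmf_zero_iff[of "dist M \<sigma> (root M) (vtime v)" "{h. view M i h = v}"] by auto
  have "set_pmf (root M) \<subseteq> nodes M (enat m)"
    by (auto simp: root_def nodes_def)
  then have "h \<in> infoset M (enat m) i v"
    using h dist_in_nodes[OF assms(1) \<sigma>] by (auto simp: infoset_def)
  then show "B i v = cond_pmf (dist M \<sigma> (root M) (vtime v)) {h. view M i h = v}"
    using assms(2) i pos unfolding consistent_def is_infoset_def by blast
qed (use assms(3) in simp)

definition truncate_strat :: "nat \<Rightarrow> ('w, 'r) bstrat \<Rightarrow> ('w, 'r) bstrat" where
  "truncate_strat m s u = (if movetime u \<le> m then s u else return_pmf Null)"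

lemma strat_ok_truncate_strat: "strat_ok M T s \<Longrightarrow> strat_ok M (enat m) (truncate_strat m s)"
  by (auto simp: strat_ok_def truncate_strat_def legal_def)

lemma agree_upto_truncate_strat:
  "m' \<le> m \<Longrightarrow> agree_upto M m' (\<sigma>(i := s)) (\<sigma>(i := truncate_strat m s))"
  by (auto simp: agree_upto_def truncate_strat_def)

lemma V_truncated_deviation_le:
  assumes PBE: "eps_PBE M (enat m) \<epsilon> \<sigma> B" and B: "belief_system M \<infinity> B" and "0 \<le> \<epsilon>"
    and i: "i \<in> {1..ntr M}" and v: "move_infoset M \<infinity> i v" and s: "strat_ok M T s"
  shows "V M i i v (\<sigma>(i := truncate_strat m s)) B \<le> V M i i v \<sigma> B + \<epsilon>"
proof (cases "movetime v \<le> m")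
  case True
  then show ?thesis
    using PBE i strat_ok_truncate_strat[OF s] move_infoset_infinity_imp_move_infoset_enat[OF v]
    unfolding eps_PBE_def by blast
next
  case False
  have \<sigma>: "profile_ok M (enat m) \<sigma>"
    using PBE by (simp add: eps_PBE_def consistent_def)
  have "(\<sigma>(i := truncate_strat m s)) l u = \<sigma> l u" if "movetime v \<le> movetime u" for l u
  proof -
    have "m < movetime u"
      using False that by simp
    moreover have "strat_ok M (enat m) (\<sigma> i)"
      using \<sigma> i by (simp add: profile_ok_def)
    ultimately show ?thesis
      by (simp add: truncate_strat_def strat_ok_enat_after_horizon)
  qed
  moreover have "is_infoset M \<infinity> i v"
    using v by (simp add: move_infoset_def)
  ultimately have "V M i i v (\<sigma>(i := truncate_strat m s)) B = V M i i v \<sigma> B"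
    using B i by (intro V_cong) auto
  then show ?thesis
    using assms(3) by simp
qed

theorem lemma1:
  fixes M :: "('w::finite, 'r) mkt"
    and m :: nat and \<epsilon> :: real
    and hs :: "('w, 'r) profile" and B :: "('w, 'r) beliefs"
  assumes "market_ok M"
    and "m \<ge> 1"
    and "\<epsilon> \<ge> 0"
    and "(hs, B) \<in> A_set M m"
    and "eps_PBE M (enat m) \<epsilon> hs B"
  shows "eps_PBE M \<infinity> (\<epsilon> + w_bound M m) hs B"
  unfolding eps_PBE_def
proof (intro conjI ballI allI impI)
  have n: "1 \<le> ntr M"
    using assms(1) by (simp add: market_ok_def)
  have hs: "profile_ok M \<infinity> hs" and B: "belief_system M \<infinity> B"
    using assms(4) by (auto simp: A_set_def profile_ok_enat_imp_profile_ok_infinity)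
  show "consistent M \<infinity> hs B"
    using assms(5) n B by (auto simp: eps_PBE_def intro: consistent_enat_imp_consistent_infinity)
  fix i v s
  assume i: "i \<in> {1..ntr M}" and v: "move_infoset M \<infinity> i v" and s: "strat_ok M \<infinity> s"
  let ?s' = "truncate_strat m s"
  have "profile_ok M \<infinity> (hs(i := s))" "profile_ok M \<infinity> (hs(i := ?s'))"
    using hs s strat_ok_enat_imp_strat_ok_infinity[OF strat_ok_truncate_strat[OF s]]
    by (auto simp: profile_ok_def)
  then have "\<bar>V M i i v (hs(i := s)) B - V M i i v (hs(i := ?s')) B\<bar> \<le> w_bound M m"
    using assms(1) i v B agree_upto_truncate_strat[of "m - 1" m]
    by (intro abs_V_diff_le_w_bound) auto
  moreover have "V M i i v (hs(i := ?s')) B \<le> V M i i v hs B + \<epsilon>"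
    using assms(5) B assms(3) i v s by (rule V_truncated_deviation_le)
  ultimately show "V M i i v (hs(i := s)) B \<le> V M i i v hs B + (\<epsilon> + w_bound M m)"
    by linarith
qed

end
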